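(* Let $(M,g)$ be a complete oriented four-dimensional Einstein manifold with $\mathrm{Ric}=g$ whose sectional curvature satisfies $K\le \frac{\sqrt3}{2}$. Fix $o\in M$ and a Berger basis $\{e_1,\dots,e_4\}$ at $o$ (see context), and let $a_1,a_2,a_3,c_1,c_2,c_3$ and $I$ be defined from it as in the context. Suppose that at $o$ the minimal sectional curvature satisfies $K_{12}\le-\epsilon<0$ for some constant $\epsilon>0$. Then: (1) if $a_2\ge 0$ and $c_2\ge 0$, then $I\ge \frac{16}{3}\epsilon$; (2) if $a_2<0$ or $c_2<0$, then $I>\frac14\epsilon$.
   Context: Curvature conventions: $R_{ijkl}=R(e_i,e_j,e_k,e_l)$ with $K_{ij}=R_{ijij}$ the sectional curvature of the plane spanned by $e_i,e_j$. A Berger basis at $o$ is a positively oriented orthonormal basis $\{e_i\}$ of $T_oM$ such that: (1) $K_{12}=\min\{K(\pi):\pi\subset T_oM\}$; (2) $K_{14}=\max\{K(\pi):\pi\subset T_oM\}$; (3) $R_{ikjk}=0$ for all $i\ne j$; (4) $|R_{1342}-R_{1234}|\le K_{13}-K_{12}$, $|R_{1423}-R_{1342}|\le K_{14}-K_{13}$, $|R_{1423}-R_{1234}|\le K_{14}-K_{12}$ (such a basis exists at every point of an oriented Einstein four-manifold, by Berger). Define $a_1=2(K_{12}+R_{1234})$, $a_2=2(K_{13}+R_{1342})$, $a_3=2(K_{14}+R_{1423})$, $c_1=2(K_{12}-R_{1234})$, $c_2=2(K_{13}-R_{1342})$, $c_3=2(K_{14}-R_{1423})$; these are the eigenvalues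 of the curvature operator restricted to self-dual and anti-self-dual 2-forms respectively, with $a_1\le a_2\le a_3$ and $c_1\le c_2\le c_3$. Define $$I=(c_2-c_1)c_3+(c_3-c_1)c_2+(a_2-a_1)a_3+(a_3-a_1)a_2 .$$ *)

theory Defs
  imports Complex_Main
begin

text \<open>Pointwise (algebraic) model: the curvature tensor of (M,g) at the point o is
  given by its components R i j k l = R(e_i,e_j,e_k,e_l) with respect to a positively
  oriented orthonormal basis e_1,...,e_4 of T_oM, indices ranging over {1..4}.
  Tangent vectors at o are represented by their coordinate functions nat => real
  (only the values at 1..4 matter).\<close>

type_synonym curv = "nat \<Rightarrow> nat \<Rightarrow> nat \<Rightarrow> nat \<Rightarrow> real"

definition idx :: "nat set" where "idx = {1..4}"

definition curvature_tensor :: "curv \<Rightarrow> bool" where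
  "curvature_tensor R \<longleftrightarrow>
     (\<forall>i\<in>idx. \<forall>j\<in>idx. \<forall>k\<in>idx. \<forall>l\<in>idx.
        R i j k l = - R j i k l \<and> R i j k l = - R i j l k \<and> R i j k l = R k l i j \<and>
        R i j k l + R j k i l + R k i j l = 0)"

definition Rform :: "curv \<Rightarrow> (nat \<Rightarrow> real) \<Rightarrow> (nat \<Rightarrow> real) \<Rightarrow> (nat \<Rightarrow> real) \<Rightarrow> (nat \<Rightarrow> real) \<Rightarrow> real" where
  "Rform R u v w z = (\<Sum>i\<in>idx. \<Sum>j\<in>idx. \<Sum>k\<in>idx. \<Sum>l\<in>idx. R i j k l * u i * v j * w k * z l)"

definition inner4 :: "(nat \<Rightarrow> real) \<Rightarrow> (nat \<Rightarrow> real) \<Rightarrow> real" where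
  "inner4 u v = (\<Sum>i\<in>idx. u i * v i)"

definition orthonormal_pair :: "(nat \<Rightarrow> real) \<Rightarrow> (nat \<Rightarrow> real) \<Rightarrow> bool" where
  "orthonormal_pair u v \<longleftrightarrow> inner4 u u = 1 \<and> inner4 v v = 1 \<and> inner4 u v = 0"

definition sec :: "curv \<Rightarrow> (nat \<Rightarrow> real) \<Rightarrow> (nat \<Rightarrow> real) \<Rightarrow> real" where
  "sec R u v = Rform R u v u v"

definition Kc :: "curv \<Rightarrow> nat \<Rightarrow> nat \<Rightarrow> real" where
  "Kc R i j = R i j i j"

definition einstein_one :: "curv \<Rightarrow> bool" where
  "einstein_one R \<longleftrightarrow> (\<forall>i\<in>idx. \<forall>j\<in>idx. (\<Sum>k\<in>idx. R i k j k) = (if i = j then 1 else 0))"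

definition berger_basis :: "curv \<Rightarrow> bool" where
  "berger_basis R \<longleftrightarrow>
     (\<forall>u v. orthonormal_pair u v \<longrightarrow> Kc R 1 2 \<le> sec R u v) \<and>
     (\<forall>u v. orthonormal_pair u v \<longrightarrow> sec R u v \<le> Kc R 1 4) \<and>
     (\<forall>i\<in>idx. \<forall>j\<in>idx. \<forall>k\<in>idx. i \<noteq> j \<longrightarrow> R i k j k = 0) \<and>
     \<bar>R 1 3 4 2 - R 1 2 3 4\<bar> \<le> Kc R 1 3 - Kc R 1 2 \<and>
     \<bar>R 1 4 2 3 - R 1 3 4 2\<bar> \<le> Kc R 1 4 - Kc R 1 3 \<and>
     \<bar>R 1 4 2 3 - R 1 2 3 4\<bar> \<le> Kc R 1 4 - Kc R 1 2"

definition a1 :: "curv \<Rightarrow> real" where "a1 R = 2 * (Kc R 1 2 + R 1 2 3 4)"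
definition a2 :: "curv \<Rightarrow> real" where "a2 R = 2 * (Kc R 1 3 + R 1 3 4 2)"
definition a3 :: "curv \<Rightarrow> real" where "a3 R = 2 * (Kc R 1 4 + R 1 4 2 3)"
definition c1 :: "curv \<Rightarrow> real" where "c1 R = 2 * (Kc R 1 2 - R 1 2 3 4)"
definition c2 :: "curv \<Rightarrow> real" where "c2 R = 2 * (Kc R 1 3 - R 1 3 4 2)"
definition c3 :: "curv \<Rightarrow> real" where "c3 R = 2 * (Kc R 1 4 - R 1 4 2 3)"

definition Iq :: "curv \<Rightarrow> real" where
  "Iq R = (c2 R - c1 R) * c3 R + (c3 R - c1 R) * c2 R + (a2 R - a1 R) * a3 R + (a3 R - a1 R) * a2 R"

end

theory Submission
  imports Defs
begin

text \<open>The Einstein condition and the first Bianchi identity give \<open>a\<^sub>1 + a\<^sub>2 + a\<^sub>3 = c\<^sub>1 + c\<^sub>2 + c\<^sub>3 = 2\<close>,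
  while \<open>a\<^sub>1 + c\<^sub>1 = 4K\<^sub>1\<^sub>2 \<le> -4\<epsilon>\<close> and \<open>a\<^sub>3 + c\<^sub>3 = 4K\<^sub>1\<^sub>4 \<le> 2\<surd>3\<close>. Each half of \<open>I\<close> equals
  \<open>2x\<^sub>2x\<^sub>3 + x\<^sub>1\<^sup>2 - 2x\<^sub>1\<close>, so if the middle eigenvalues are nonnegative then \<open>I \<ge> -2(a\<^sub>1 + c\<^sub>1) \<ge> 8\<epsilon>\<close>.
  If, say, \<open>a\<^sub>2 < 0\<close>, then \<open>I + (a\<^sub>1 + c\<^sub>1)/16\<close> is an explicit sum of terms that are nonnegative
  on the region cut out by the ordering and the two trace constraints, whence \<open>I > -K\<^sub>1\<^sub>2/4 \<ge> \<epsilon>/4\<close>.\<close>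

definition gap_form :: "real \<Rightarrow> real \<Rightarrow> real \<Rightarrow> real" where
  "gap_form x1 x2 x3 = (x2 - x1) * x3 + (x3 - x1) * x2"

lemma Iq_eq_gap_form: "Iq R = gap_form (c1 R) (c2 R) (c3 R) + gap_form (a1 R) (a2 R) (a3 R)"
  by (simp add: Iq_def gap_form_def)

lemma gap_form_eq:
  assumes "x1 + x2 + x3 = 2"
  shows "gap_form x1 x2 x3 = 2 * x2 * x3 + x1\<^sup>2 - 2 * x1"
proof -
  have "x2 + x3 = 2 - x1" using assms by linarith
  then have "x1 * (x2 + x3) = x1 * (2 - x1)" by simp
  then show ?thesis by (simp add: gap_form_def power2_eq_square algebra_simps)
qed

lemma gap_form_ge:
  assumes "x1 + x2 + x3 = 2" "0 \<le> x2" "x2 \<le> x3"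
  shows "gap_form x1 x2 x3 \<ge> - 2 * x1"
proof -
  have "0 \<le> x2 * x3" using assms(2,3) by simp
  then show ?thesis using gap_form_eq[OF assms(1)] by (simp add: add_increasing)
qed

lemma two_sqrt3_bounds: "3.4 < 2 * sqrt 3 \<and> 2 * sqrt 3 < (3.5::real)"
proof -
  have "(1.7::real) < sqrt 3" by (rule real_less_rsqrt) (simp add: power2_eq_square)
  moreover have "sqrt 3 < sqrt ((1.75::real)\<^sup>2)" by (simp only: real_sqrt_less_iff) (simp add: power2_eq_square)
  ultimately show ?thesis by simp
qed

text \<open>A positivity certificate: after multiplying by \<open>p\<close> (if \<open>3p \<le> 2s - 6\<close>) or by \<open>s - 3 - p/2\<close>
  (otherwise) the polynomial becomes a combination of products of nonnegative factors.\<close>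

lemma quadratic_nonneg_on_region:
  fixes p q s :: real
  assumes s_sq: "s * s = 12" and s_gt: "3.4 < s" and s_lt: "s < 3.5"
    and q_pos: "0 < q" and q_le_p: "q \<le> p" and region: "p / 2 + q \<le> s - 3"
  shows "2*p*p - 4*p*q - 4*q*q + (2*s - 8)*p + (4*s - 16)*q + 12*s - 40 \<ge> 0"
    (is "?P \<ge> 0")
proof -
  define g where "g = 2*p*p + (2*s - 8)*p + 12*s - 40"
  have "g = 2 * (p + (s - 4) / 2)\<^sup>2 + (16*s - 54)"
    unfolding g_def using s_sq by (simp add: power2_eq_square field_simps)
  moreover have "16*s - 54 > 0" using s_gt by linarith
  ultimately have g_nonneg: "g \<ge> 0" by (simp add: add_nonneg_nonneg)
  have p_pos: "p > 0" using q_pos q_le_p by linarith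
  show ?thesis
  proof (cases "3 * p \<le> 2*s - 6")
    case True
    define h where "h = -6*p*p + (6*s - 24)*p + 12*s - 40"
    have "3 * h = -2 * ((3*p - (2*s - 6)) * (3*p - (s - 6)))"
      unfolding h_def using s_sq by (simp add: algebra_simps)
    moreover have "(3*p - (2*s - 6)) * (3*p - (s - 6)) \<le> 0"
      using True p_pos s_lt by (intro mult_nonpos_nonneg) linarith+
    ultimately have "h \<ge> 0" by linarith
    moreover have "p * ?P = (p - q) * g + q * h + 4*p*q*(p - q)"
      unfolding g_def h_def by algebra
    ultimately have "p * ?P \<ge> 0" using g_nonneg q_le_p q_pos p_pos by simp
    then show ?thesis using p_pos by (simp add: zero_le_mult_iff)
  next
    case False
    define m where "m = s - 3 - p / 2"
    have q_le_m: "q \<le> m" using region m_def by linarith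
    define h where "h = 3*p*p + 8*s - 28"
    have "3 * h = (3*p - (2*s - 6)) * (3*p + (2*s - 6))"
      unfolding h_def using s_sq by (simp add: algebra_simps)
    moreover have "(3*p - (2*s - 6)) * (3*p + (2*s - 6)) \<ge> 0"
      using False p_pos s_gt by (intro mult_nonneg_nonneg) linarith+
    ultimately have "h \<ge> 0" by linarith
    moreover have "m * ?P = (m - q) * g + q * h + 4*q*m*(m - q)"
      unfolding g_def h_def m_def using s_sq by (simp add: algebra_simps)
    ultimately have "m * ?P \<ge> 0" using g_nonneg q_le_m q_pos by simp
    then show ?thesis using q_pos q_le_m by (simp add: zero_le_mult_iff)
  qed
qed

lemma gap_form_sum_pos_of_neg_middle:
  fixes a1 a2 a3 c1 c2 c3 :: real
  assumes "a1 \<le> a2" "a2 \<le> a3" "c1 \<le> c2" "c2 \<le> c3"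
    and a_sum: "a1 + a2 + a3 = 2" and c_sum: "c1 + c2 + c3 = 2"
    and top: "a3 + c3 \<le> 2 * sqrt 3" and bottom: "a1 + c1 < 0" and "a2 < 0"
  shows "gap_form a1 a2 a3 + gap_form c1 c2 c3 + (a1 + c1) / 16 > 0"
proof -
  define s :: real where "s = 2 * sqrt 3"
  have s_sq: "s * s = 12" and s_gt: "3.4 < s" and s_lt: "s < 3.5"
    using two_sqrt3_bounds unfolding s_def by simp_all
  define p q where "p = - a1" and "q = - a2"
  \<comment> \<open>\<open>m\<close> is the largest value \<open>c\<^sub>3\<close> can take, given \<open>a\<^sub>3 = 2 + p + q\<close>.\<close>
  define m where "m = s - 2 - p - q"
  have c3_le_m: "c3 \<le> m" using top a_sum unfolding m_def p_def q_def s_def by linarith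
  have "p - c1 > 0" and q_pos: "q > 0" using bottom \<open>a2 < 0\<close> unfolding p_def q_def by linarith+
  moreover have "2 + 2*m - 1/16 - c1 - p > 0"
    using q_pos c3_le_m m_def assms(3,4) c_sum s_lt by linarith
  ultimately have pos: "(p - c1) * (2 + 2*m - 1/16 - c1 - p) > 0" by simp
  have nonneg: "(m - c3) * (m - c2) \<ge> 0" using c3_le_m assms(4) by simp
  have "q \<le> p" using assms(1) unfolding p_def q_def by linarith
  moreover have "p / 2 + q \<le> s - 3" using \<open>p - c1 > 0\<close> c3_le_m m_def assms(3,4) c_sum by linarith
  ultimately have poly: "2*p*p - 4*p*q - 4*q*q + (2*s - 8)*p + (4*s - 16)*q + 12*s - 40 \<ge> 0"
    by (rule quadratic_nonneg_on_region[OF s_sq s_gt s_lt q_pos])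
  have "gap_form a1 a2 a3 + gap_form c1 c2 c3 + (a1 + c1) / 16
      = (2*p*p - 4*p*q - 4*q*q + (2*s - 8)*p + (4*s - 16)*q + 12*s - 40)
        + 2 * ((m - c3) * (m - c2)) + (p - c1) * (2 + 2*m - 1/16 - c1 - p)"
  proof -
    have eqs: "a1 = - p" "a2 = - q" "a3 = 2 + p + q" "c3 = 2 - c1 - c2"
      using a_sum c_sum unfolding p_def q_def by linarith+
    show ?thesis unfolding gap_form_def m_def eqs using s_sq by (simp add: field_simps)
  qed
  then show ?thesis using pos nonneg poly by linarith
qed

definition basis_vec :: "nat \<Rightarrow> nat \<Rightarrow> real" where
  "basis_vec i k = of_bool (k = i)"

lemma sec_basis_vec:
  assumes "i \<in> idx" "j \<in> idx"
  shows "sec R (basis_vec i) (basis_vec j) = Kc R i j"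
  using assms by (simp add: sec_def Rform_def basis_vec_def Kc_def of_bool_def
      if_distrib[of "\<lambda>x. _ * x"] idx_def cong: if_cong)

lemma orthonormal_pair_basis_vec:
  assumes "i \<in> idx" "j \<in> idx" "i \<noteq> j"
  shows "orthonormal_pair (basis_vec i) (basis_vec j)"
  using assms by (simp add: orthonormal_pair_def inner4_def basis_vec_def of_bool_def
      if_distrib[of "\<lambda>x. _ * x"] idx_def cong: if_cong)

lemma Kc_le_of_sec_le:
  assumes "\<forall>u v. orthonormal_pair u v \<longrightarrow> sec R u v \<le> b" "i \<in> idx" "j \<in> idx" "i \<noteq> j"
  shows "Kc R i j \<le> b"
proof -
  have "sec R (basis_vec i) (basis_vec j) \<le> b"
    using assms(1) orthonormal_pair_basis_vec[OF assms(2-4)] by blast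
  then show ?thesis using sec_basis_vec[OF assms(2,3)] by simp
qed

lemma Kc_sum_eq_one:
  assumes "curvature_tensor R" "einstein_one R"
  shows "Kc R 1 2 + Kc R 1 3 + Kc R 1 4 = 1"
proof -
  have one: "(1::nat) \<in> idx" by (simp add: idx_def)
  have "R 1 1 1 1 = 0"
    using assms(1)[unfolded curvature_tensor_def, rule_format, OF one one one one] by linarith
  moreover have "(\<Sum>k\<in>idx. R 1 k 1 k) = 1"
    using assms(2)[unfolded einstein_one_def, rule_format, OF one one] by simp
  ultimately show ?thesis by (simp add: Kc_def idx_def numeral_eq_Suc)
qed

lemma first_bianchi_1234:
  assumes "curvature_tensor R"
  shows "R 1 2 3 4 + R 1 3 4 2 + R 1 4 2 3 = 0"
proof -
  have sym: "R i j k l = - R j i k l" "R i j k l = - R i j l k" "R i j k l = R k l i j"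
    "R i j k l + R j k i l + R k i j l = 0"
    if "i \<in> idx" "j \<in> idx" "k \<in> idx" "l \<in> idx" for i j k l
    using assms[unfolded curvature_tensor_def, rule_format, OF that] by blast+
  have "R 1 2 3 4 + R 2 3 1 4 + R 3 1 2 4 = 0" by (rule sym(4)) (simp_all add: idx_def)
  moreover have "R 2 3 1 4 = R 1 4 2 3" by (rule sym(3)) (simp_all add: idx_def)
  moreover have "R 3 1 2 4 = - R 1 3 2 4" "R 1 3 2 4 = - R 1 3 4 2"
    by (rule sym(1), simp_all add: idx_def) (rule sym(2), simp_all add: idx_def)
  ultimately show ?thesis by linarith
qed

lemma berger_basis_eigenvalues_ordered:
  assumes "berger_basis R"
  shows "a1 R \<le> a2 R" "a2 R \<le> a3 R" "c1 R \<le> c2 R" "c2 R \<le> c3 R"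
proof -
  have "\<bar>R 1 3 4 2 - R 1 2 3 4\<bar> \<le> Kc R 1 3 - Kc R 1 2"
    and "\<bar>R 1 4 2 3 - R 1 3 4 2\<bar> \<le> Kc R 1 4 - Kc R 1 3"
    using assms unfolding berger_basis_def by blast+
  then show "a1 R \<le> a2 R" "a2 R \<le> a3 R" "c1 R \<le> c2 R" "c2 R \<le> c3 R"
    unfolding a1_def a2_def a3_def c1_def c2_def c3_def abs_le_iff by argo+
qed

lemma eigenvalue_sums_eq_two:
  assumes "curvature_tensor R" "einstein_one R"
  shows "a1 R + a2 R + a3 R = 2" "c1 R + c2 R + c3 R = 2"
  using Kc_sum_eq_one[OF assms] first_bianchi_1234[OF assms(1)]
  unfolding a1_def a2_def a3_def c1_def c2_def c3_def by argo+

theorem lemma2p2: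
  fixes R :: curv and \<epsilon> :: real
  assumes "curvature_tensor R"
    and "einstein_one R"
    and "\<forall>u v. orthonormal_pair u v \<longrightarrow> sec R u v \<le> sqrt 3 / 2"
    and "berger_basis R"
    and "\<epsilon> > 0"
    and "Kc R 1 2 \<le> - \<epsilon>"
  shows "(a2 R \<ge> 0 \<and> c2 R \<ge> 0 \<longrightarrow> Iq R \<ge> 16 / 3 * \<epsilon>) \<and>
         (a2 R < 0 \<or> c2 R < 0 \<longrightarrow> Iq R > \<epsilon> / 4)"
proof -
  note ordered = berger_basis_eigenvalues_ordered[OF assms(4)]
  note a_sum = eigenvalue_sums_eq_two(1)[OF assms(1,2)]
  note c_sum = eigenvalue_sums_eq_two(2)[OF assms(1,2)]
  have "Kc R 1 4 \<le> sqrt 3 / 2" using Kc_le_of_sec_le[OF assms(3)] by (simp add: idx_def)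
  then have top: "a3 R + c3 R \<le> 2 * sqrt 3" by (simp add: a3_def c3_def)
  have bottom: "a1 R + c1 R = 4 * Kc R 1 2" by (simp add: a1_def c1_def)
  show ?thesis
  proof (intro conjI impI)
    assume "a2 R \<ge> 0 \<and> c2 R \<ge> 0"
    then have "Iq R \<ge> - 2 * (a1 R + c1 R)"
      using gap_form_ge[OF a_sum _ ordered(2)] gap_form_ge[OF c_sum _ ordered(4)]
      unfolding Iq_eq_gap_form by argo
    then show "Iq R \<ge> 16 / 3 * \<epsilon>" using bottom assms(5,6) by argo
  next
    assume middle_neg: "a2 R < 0 \<or> c2 R < 0"
    have "a1 R + c1 R < 0" using bottom assms(5,6) by argo
    then have "Iq R + (a1 R + c1 R) / 16 > 0"
      using middle_neg gap_form_sum_pos_of_neg_middle[OF ordered a_sum c_sum top]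
        gap_form_sum_pos_of_neg_middle[OF ordered(3,4,1,2) c_sum a_sum] top
      unfolding Iq_eq_gap_form by argo
    then show "Iq R > \<epsilon> / 4" using bottom assms(6) by argo
  qed
qed

end
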